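(* The smallest cardinality of a self-binding group is at most $\mathfrak{se}$.
   Context: All groups are abelian. A group is torsionless if it embeds in $\mathbb{Z}^I$ for some set $I$. Rank means torsion-free rank. A group $G$ binds a subgroup $H$ if every homomorphism from $G$ to a free abelian group maps $H$ into a group of finite rank. A torsionless group is self-binding if it has infinite rank and binds itself. A torsionless group $G$ exhibits the Specker phenomenon if there is a sequence $(a_n)_{n\in\omega}$ of nonzero elements of $G$ such that every homomorphism $G\to\mathbb{Z}$ maps all but finitely many $a_n$ to $0$. $\mathfrak{se}$ denotes the smallest cardinality of a group exhibiting the Specker phenomenon (equivalently, the smallest cardinality of a group $G$ with $\mathbb{Z}^{(\omega)}\subseteq G\subseteq\mathbb{Z}^\omega$ such that every homomorphism $G\to\mathbb{Z}$ vanishes on all but finitely many standard unit vectors $e_n$). *)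

theory Defs
  imports Main "HOL-Library.Function_Algebras"
begin

text \<open>Torsionless groups are represented as subgroups of a product Z^X,
  i.e. as sets of functions X \<Rightarrow> int closed under the pointwise operations.
  Every such set is torsionless, and every torsionless group arises this way.\<close>

definition subgrp :: "('x \<Rightarrow> int) set \<Rightarrow> bool" where
  "subgrp G \<longleftrightarrow> 0 \<in> G \<and> (\<forall>x\<in>G. \<forall>y\<in>G. x + y \<in> G) \<and> (\<forall>x\<in>G. - x \<in> G)"

definition additive_on :: "'a set \<Rightarrow> ('a::plus \<Rightarrow> 'b::plus) \<Rightarrow> bool" where
  "additive_on G h \<longleftrightarrow> (\<forall>x\<in>G. \<forall>y\<in>G. h (x + y) = h x + h y)"

definition free_ab :: "('j \<Rightarrow> int) set" where
  "free_ab = {v. finite {j. v j \<noteq> 0}}"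

definition Z_indep :: "('y \<Rightarrow> int) set \<Rightarrow> bool" where
  "Z_indep A \<longleftrightarrow> finite A \<and>
     (\<forall>c :: ('y \<Rightarrow> int) \<Rightarrow> int. (\<forall>j. (\<Sum>a\<in>A. c a * a j) = 0) \<longrightarrow> (\<forall>a\<in>A. c a = 0))"

definition finite_rank :: "('y \<Rightarrow> int) set \<Rightarrow> bool" where
  "finite_rank S \<longleftrightarrow> (\<exists>n::nat. \<forall>A. A \<subseteq> S \<longrightarrow> Z_indep A \<longrightarrow> card A \<le> n)"

text \<open>The free abelian groups are Z^(J) with J a set of elements
  of G's ambient type (this suffices, since the image of G is free of rank \<le> |G|).\<close>
definition binds :: "('x \<Rightarrow> int) set \<Rightarrow> ('x \<Rightarrow> int) set \<Rightarrow> bool" where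
  "binds G S \<longleftrightarrow>
     (\<forall>h :: ('x \<Rightarrow> int) \<Rightarrow> (('x \<Rightarrow> int) \<Rightarrow> int).
        additive_on G h \<longrightarrow> h ` G \<subseteq> free_ab \<longrightarrow> finite_rank (h ` S))"

definition self_binding :: "('x \<Rightarrow> int) set \<Rightarrow> bool" where
  "self_binding G \<longleftrightarrow> subgrp G \<and> \<not> finite_rank G \<and> binds G G"

definition specker :: "('x \<Rightarrow> int) set \<Rightarrow> bool" where
  "specker G \<longleftrightarrow> subgrp G \<and>
     (\<exists>a :: nat \<Rightarrow> ('x \<Rightarrow> int). (\<forall>n. a n \<in> G \<and> a n \<noteq> 0) \<and>
        (\<forall>f :: ('x \<Rightarrow> int) \<Rightarrow> int. additive_on G f \<longrightarrow> finite {n. f (a n) \<noteq> 0}))"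

end

(* Let (a_n) be a Specker sequence in G. Eliminating step by step, one finds a subsequence
   a_(r k) and homomorphisms phi_k : G -> Z with phi_k (a_(r m)) <> 0 iff k = m. Then
   iota x = (phi_k x)_k maps G into Z^omega and a_(r k) to a nonzero multiple of the unit
   vector e_k, so the e_k form a Specker sequence in every subgroup of Z^omega containing them
   and iota G. Write each iota x = y + z with 2^n | y_n and 3^n | z_n, and let H be the
   purification of the subgroup generated by the e_k and these y and z; then |H| <= |G|.
   A homomorphism H -> Z vanishing on all e_k also kills y, because removing the first K
   coordinates of y leaves an element of 2^K H; likewise for z. Hence every homomorphism from H
   to a free abelian group is nonzero on only finitely many e_k and is determined by its values
   there, so its image has finite rank: H is self-binding. *)

theory Submission
  imports Defs "HOL.Rat" "HOL.Vector_Spaces" "HOL-Library.Nat_Bijection" "HOL-Library.Infinite_Set"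
begin

unbundle cardinal_syntax

definition zscale :: "int \<Rightarrow> ('a \<Rightarrow> int) \<Rightarrow> 'a \<Rightarrow> int" (infixr \<open>*z\<close> 75) where
  "c *z u = (\<lambda>j. c * u j)"

interpretation zmod: module zscale
  by unfold_locales (auto simp: zscale_def fun_eq_iff algebra_simps)

lemma additive_on_zero:
  fixes f :: "('x \<Rightarrow> int) \<Rightarrow> 'b :: ab_group_add"
  assumes "0 \<in> H" "additive_on H f" shows "f 0 = 0"
proof -
  have "f (0 + 0) = f 0 + f 0" using assms unfolding additive_on_def by blast
  then show ?thesis by simp
qed

lemma additive_on_uminus:
  fixes f :: "('x \<Rightarrow> int) \<Rightarrow> 'b :: ab_group_add"
  assumes "subgrp H" "additive_on H f" "x \<in> H" shows "f (- x) = - f x"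
proof -
  have "f (- x) + f x = f (- x + x)" using assms unfolding subgrp_def additive_on_def by metis
  also have "\<dots> = 0" using assms additive_on_zero[of H f] unfolding subgrp_def by simp
  finally show ?thesis by (simp add: eq_neg_iff_add_eq_0)
qed

lemma subgrp_image:
  assumes H: "subgrp H" and g: "additive_on H g" shows "subgrp (g ` H)"
proof -
  have "0 \<in> g ` H" using H additive_on_zero[OF _ g] by (metis image_eqI subgrp_def)
  moreover have "g x + g y \<in> g ` H" if "x \<in> H" "y \<in> H" for x y
    using that H g unfolding subgrp_def additive_on_def by (metis image_eqI)
  moreover have "- g x \<in> g ` H" if "x \<in> H" for x
    using that H additive_on_uminus[OF H g that] unfolding subgrp_def by (metis image_eqI)
  ultimately show ?thesis unfolding subgrp_def by blast
qed

lemma additive_on_comp: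
  "additive_on G g \<Longrightarrow> g ` G \<subseteq> H \<Longrightarrow> additive_on H f \<Longrightarrow> additive_on G (f \<circ> g)"
  by (auto simp: additive_on_def subset_iff)

lemma subgrp_zscale_nat:
  assumes H: "subgrp H" and x: "x \<in> H" shows "int n *z x \<in> H"
proof (induction n)
  case 0
  have "int 0 *z x = 0" by simp
  then show ?case using H unfolding subgrp_def by metis
next
  case (Suc n)
  have "int (Suc n) *z x = int n *z x + x" by (simp add: zmod.scale_left_distrib)
  with Suc x H show ?case unfolding subgrp_def by metis
qed

lemma subgrp_iff_subspace: "subgrp H \<longleftrightarrow> zmod.subspace H"
proof
  assume H: "subgrp H"
  have "c *z x \<in> H" if "x \<in> H" for c x
  proof (cases "c \<ge> 0")
    case True
    then show ?thesis using subgrp_zscale_nat[OF H that, of "nat c"] by simp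
  next
    case False
    then have "c *z x = - (int (nat (- c)) *z x)" by simp
    with subgrp_zscale_nat[OF H that] H show ?thesis unfolding subgrp_def by metis
  qed
  then show "zmod.subspace H" using H by (simp add: subgrp_def zmod.subspace_def)
qed (use zmod.subspace_0 zmod.subspace_add zmod.subspace_neg in \<open>auto simp: subgrp_def\<close>)

lemma additive_on_zscale:
  assumes H: "subgrp H" and f: "additive_on H f" and x: "x \<in> H"
  shows "f (c *z x) = c * (f x :: int)"
proof -
  have nat: "f (int n *z x) = int n * f x" for n
  proof (induction n)
    case 0
    have "int 0 *z x = 0" by simp
    then show ?case using additive_on_zero[OF _ f] H unfolding subgrp_def by (metis mult_zero_left of_nat_0)
  next
    case (Suc n)
    have "int (Suc n) *z x = int n *z x + x" by (simp add: zmod.scale_left_distrib)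
    then have "f (int (Suc n) *z x) = f (int n *z x) + f x"
      using f x subgrp_zscale_nat[OF H x] by (simp add: additive_on_def)
    also have "\<dots> = int (Suc n) * f x" using Suc by (simp add: algebra_simps)
    finally show ?case .
  qed
  show ?thesis
  proof (cases "c \<ge> 0")
    case True
    then show ?thesis using nat[of "nat c"] by simp
  next
    case False
    define m where "m = nat (- c)"
    have c: "c = - int m" using False by (simp add: m_def)
    have "f (c *z x) = f (- (int m *z x))" by (simp add: c)
    also have "\<dots> = - f (int m *z x)" by (rule additive_on_uminus[OF H f subgrp_zscale_nat[OF H x]])
    also have "\<dots> = c * f x" by (simp add: nat c)
    finally show ?thesis .
  qed
qed

lemma subspace_kernel:
  assumes H: "subgrp H" and f: "additive_on H f" shows "zmod.subspace {x \<in> H. f x = (0 :: int)}"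
  using H additive_on_zero[OF _ f] additive_on_zscale[OF H f] f
  unfolding subgrp_iff_subspace zmod.subspace_def additive_on_def by auto

section \<open>Specker sequences\<close>

definition unit_vec :: "'a \<Rightarrow> 'a \<Rightarrow> int" where
  "unit_vec j = (\<lambda>i. if i = j then 1 else 0)"

definition specker_seq :: "('a \<Rightarrow> int) set \<Rightarrow> (nat \<Rightarrow> 'a \<Rightarrow> int) \<Rightarrow> bool" where
  "specker_seq G a \<longleftrightarrow> (\<forall>f :: ('a \<Rightarrow> int) \<Rightarrow> int. additive_on G f \<longrightarrow> finite {n. f (a n) \<noteq> 0})"

lemma specker_iff: "specker G \<longleftrightarrow> subgrp G \<and> (\<exists>a. (\<forall>n. a n \<in> G \<and> a n \<noteq> 0) \<and> specker_seq G a)"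
  by (simp add: specker_def specker_seq_def)

lemma specker_seq_comp:
  assumes "additive_on G g" "g ` G \<subseteq> H" "specker_seq G a" shows "specker_seq H (g \<circ> a)"
  unfolding specker_seq_def
proof (intro allI impI)
  fix f :: "('b \<Rightarrow> int) \<Rightarrow> int" assume "additive_on H f"
  then have "additive_on G (f \<circ> g)" using assms(1,2) by (rule additive_on_comp[rotated 2])
  then have "finite {n. (f \<circ> g) (a n) \<noteq> 0}" using assms(3) unfolding specker_seq_def by blast
  then show "finite {n. f ((g \<circ> a) n) \<noteq> 0}" by simp
qed

lemma specker_seq_reindex:
  assumes "inj r" "specker_seq H a" shows "specker_seq H (a \<circ> r)"
  unfolding specker_seq_def
proof (intro allI impI)
  fix f :: "('a \<Rightarrow> int) \<Rightarrow> int" assume "additive_on H f"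
  then have "finite (r -` {n. f (a n) \<noteq> 0})" using assms by (intro finite_vimageI) (auto simp: specker_seq_def)
  then show "finite {k. f ((a \<circ> r) k) \<noteq> 0}" by (simp add: vimage_def)
qed

lemma specker_seq_unscale:
  assumes H: "subgrp H" and b: "range b \<subseteq> H" and c: "\<And>k. c k \<noteq> 0"
    and seq: "specker_seq H (\<lambda>k. c k *z b k)"
  shows "specker_seq H b"
  unfolding specker_seq_def
proof (intro allI impI)
  fix f :: "('a \<Rightarrow> int) \<Rightarrow> int" assume f: "additive_on H f"
  have "f (c k *z b k) = c k * f (b k)" for k using additive_on_zscale[OF H f] b by blast
  then have "{k. f (b k) \<noteq> 0} = {k. f (c k *z b k) \<noteq> 0}" using c by auto
  then show "finite {k. f (b k) \<noteq> 0}" using seq f unfolding specker_seq_def by simp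
qed

definition dual_spanning :: "('a \<Rightarrow> int) set \<Rightarrow> (nat \<Rightarrow> 'a \<Rightarrow> int) \<Rightarrow> bool" where
  "dual_spanning H b \<longleftrightarrow>
     (\<forall>f :: ('a \<Rightarrow> int) \<Rightarrow> int. additive_on H f \<longrightarrow> (\<forall>n. f (b n) = 0) \<longrightarrow> (\<forall>x\<in>H. f x = 0))"

lemma dual_spanning_image:
  assumes g: "additive_on H g" and b: "dual_spanning H b" shows "dual_spanning (g ` H) (g \<circ> b)"
  unfolding dual_spanning_def
proof (intro allI impI ballI)
  fix f :: "('b \<Rightarrow> int) \<Rightarrow> int" and x
  assume f: "additive_on (g ` H) f" and f0: "\<forall>n. f ((g \<circ> b) n) = 0" and x: "x \<in> g ` H"
  have "additive_on H (f \<circ> g)" using g _ f by (rule additive_on_comp) simp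
  moreover have "\<forall>n. (f \<circ> g) (b n) = 0" using f0 by simp
  ultimately have "\<forall>z\<in>H. (f \<circ> g) z = 0" using b unfolding dual_spanning_def by blast
  then show "f x = 0" using x by auto
qed

section \<open>Biorthogonal systems\<close>

lemma exists_functional_vanishing_on_biorthogonal:
  fixes \<phi> :: "'k \<Rightarrow> 'a::plus \<Rightarrow> int" and \<psi> :: "'a \<Rightarrow> int"
  assumes "finite I" and \<psi>: "additive_on G \<psi>" "\<psi> x \<noteq> 0"
    and "\<And>i. i \<in> I \<Longrightarrow> additive_on G (\<phi> i)" "\<And>i. i \<in> I \<Longrightarrow> \<phi> i (y i) \<noteq> 0"
    and "\<And>i. i \<in> I \<Longrightarrow> \<phi> i x = 0" "\<And>i j. i \<in> I \<Longrightarrow> j \<in> I \<Longrightarrow> i \<noteq> j \<Longrightarrow> \<phi> i (y j) = 0"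
  shows "\<exists>\<chi> :: 'a \<Rightarrow> int. additive_on G \<chi> \<and> \<chi> x \<noteq> 0 \<and> (\<forall>i\<in>I. \<chi> (y i) = 0)"
  using assms(1,4-)
proof (induction I rule: finite_induct)
  case empty
  show ?case using \<psi> by auto
next
  case (insert i I)
  have "\<exists>\<chi> :: 'a \<Rightarrow> int. additive_on G \<chi> \<and> \<chi> x \<noteq> 0 \<and> (\<forall>j\<in>I. \<chi> (y j) = 0)"
    using insert.prems by (intro insert.IH) auto
  then obtain \<chi> :: "'a \<Rightarrow> int" where \<chi>: "additive_on G \<chi>" "\<chi> x \<noteq> 0" "\<forall>j\<in>I. \<chi> (y j) = 0"
    by blast
  \<comment> \<open>one step of Gaussian elimination\<close>
  define \<chi>' where "\<chi>' z = \<phi> i (y i) * \<chi> z - \<chi> (y i) * \<phi> i z" for z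
  have "additive_on G \<chi>'"
    using \<chi>(1) insert.prems(1)[of i] by (simp add: additive_on_def \<chi>'_def algebra_simps)
  moreover have "\<chi>' x \<noteq> 0" using \<chi>(2) insert.prems by (simp add: \<chi>'_def)
  moreover have "\<forall>j\<in>insert i I. \<chi>' (y j) = 0"
    using \<chi>(3) insert.hyps(2) insert.prems(4)[of i] by (auto simp: \<chi>'_def)
  ultimately show ?case by blast
qed

lemma specker_seq_biorthogonal_extend:
  fixes \<phi> :: "nat \<Rightarrow> ('a \<Rightarrow> int) \<Rightarrow> int"
  assumes a: "specker_seq G a" "\<And>n. a n \<noteq> 0"
    and \<phi>: "\<And>i. i < k \<Longrightarrow> additive_on G (\<phi> i)" "\<And>i. i < k \<Longrightarrow> \<phi> i (a (r i)) \<noteq> 0"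
      "\<And>i j. i < k \<Longrightarrow> j < k \<Longrightarrow> i \<noteq> j \<Longrightarrow> \<phi> i (a (r j)) = 0"
  shows "\<exists>m (\<chi> :: ('a \<Rightarrow> int) \<Rightarrow> int). additive_on G \<chi> \<and> \<chi> (a m) \<noteq> 0 \<and> (\<forall>i<k. \<phi> i (a m) = 0 \<and> \<chi> (a (r i)) = 0)"
proof -
  have "finite (\<Union>i<k. {n. \<phi> i (a n) \<noteq> 0})"
    using a(1) \<phi>(1) unfolding specker_seq_def by (intro finite_UN_I) auto
  then obtain m where m: "\<forall>i<k. \<phi> i (a m) = 0" using ex_new_if_finite[OF infinite_UNIV_nat] by blast
  obtain j where j: "a m j \<noteq> 0" using a(2)[of m] by (auto simp: fun_eq_iff)
  have "additive_on G (\<lambda>z. z j)" by (simp add: additive_on_def)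
  then have "\<exists>\<chi> :: ('a \<Rightarrow> int) \<Rightarrow> int. additive_on G \<chi> \<and> \<chi> (a m) \<noteq> 0 \<and> (\<forall>i\<in>{..<k}. \<chi> ((a \<circ> r) i) = 0)"
    by (intro exists_functional_vanishing_on_biorthogonal[where \<phi> = \<phi>]) (use j m \<phi> in auto)
  then obtain \<chi> :: "('a \<Rightarrow> int) \<Rightarrow> int" where "additive_on G \<chi>" "\<chi> (a m) \<noteq> 0" "\<forall>i<k. \<chi> (a (r i)) = 0"
    by auto
  then show ?thesis using m by blast
qed

lemma specker_seq_biorthogonal:
  assumes a: "specker_seq G a" "\<And>n. a n \<noteq> 0"
  shows "\<exists>r (\<phi> :: nat \<Rightarrow> ('a \<Rightarrow> int) \<Rightarrow> int). (\<forall>k. additive_on G (\<phi> k)) \<and>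
    (\<forall>k. \<phi> k (a (r k)) \<noteq> 0) \<and> (\<forall>k m. k \<noteq> m \<longrightarrow> \<phi> k (a (r m)) = 0)"
proof -
  \<comment> \<open>\<open>f k = (r k, \<phi> k)\<close> is chosen by recursion on \<open>k\<close>, biorthogonal to all earlier pairs\<close>
  define P :: "(nat \<Rightarrow> nat \<times> (('a \<Rightarrow> int) \<Rightarrow> int)) \<Rightarrow> nat \<Rightarrow> nat \<times> (('a \<Rightarrow> int) \<Rightarrow> int) \<Rightarrow> bool"
    where "P f k p \<longleftrightarrow> additive_on G (snd p) \<and> snd p (a (fst p)) \<noteq> 0 \<and>
      (\<forall>i<k. snd (f i) (a (fst p)) = 0 \<and> snd p (a (fst (f i))) = 0)" for f k p
  have biorth: "snd (f i) (a (fst (f j))) = 0"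
    if prev: "\<And>l. l < k \<Longrightarrow> P f l (f l)" and "i < k" "j < k" "i \<noteq> j" for f k i j
  proof (cases "i < j")
    case True
    then show ?thesis using prev[OF \<open>j < k\<close>] unfolding P_def by blast
  next
    case False
    then have "j < i" using \<open>i \<noteq> j\<close> by simp
    then show ?thesis using prev[OF \<open>i < k\<close>] unfolding P_def by blast
  qed
  have "\<exists>f. \<forall>k. P f k (f k)"
  proof (rule dependent_wellorder_choice)
    show "P f k p = P g k p" if "\<And>i. i < k \<Longrightarrow> f i = g i" for f g k p
      using that by (simp add: P_def)
  next
    fix k f assume prev: "\<And>i. i < k \<Longrightarrow> P f i (f i)"
    have "\<exists>m (\<chi> :: ('a \<Rightarrow> int) \<Rightarrow> int). additive_on G \<chi> \<and> \<chi> (a m) \<noteq> 0 \<and>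
        (\<forall>i<k. (snd \<circ> f) i (a m) = 0 \<and> \<chi> (a ((fst \<circ> f) i)) = 0)"
    proof (rule specker_seq_biorthogonal_extend[OF a])
      show "additive_on G ((snd \<circ> f) i)" "(snd \<circ> f) i (a ((fst \<circ> f) i)) \<noteq> 0" if "i < k" for i
        using prev[OF that] by (simp_all add: P_def)
      show "(snd \<circ> f) i (a ((fst \<circ> f) j)) = 0" if "i < k" "j < k" "i \<noteq> j" for i j
        using biorth[OF prev that] by simp
    qed
    then obtain m and \<chi> :: "('a \<Rightarrow> int) \<Rightarrow> int" where "additive_on G \<chi>" "\<chi> (a m) \<noteq> 0"
      "\<forall>i<k. snd (f i) (a m) = 0 \<and> \<chi> (a (fst (f i))) = 0"
      by auto
    then show "\<exists>p. P f k p" by (intro exI[of _ "(m, \<chi>)"]) (simp add: P_def)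
  qed
  then obtain f where f: "\<And>k. P f k (f k)" by blast
  have "additive_on G ((snd \<circ> f) k)" "(snd \<circ> f) k (a ((fst \<circ> f) k)) \<noteq> 0" for k
    using f[of k] by (simp_all add: P_def)
  moreover have "(snd \<circ> f) k (a ((fst \<circ> f) m)) = 0" if "k \<noteq> m" for k m
    using biorth[OF f, of k "Suc (max k m)" m] that by simp
  ultimately show ?thesis by blast
qed

lemma specker_embeds_unit_vecs:
  assumes "specker G"
  shows "\<exists>\<iota> :: ('a \<Rightarrow> int) \<Rightarrow> nat \<Rightarrow> int.
    \<forall>H. subgrp H \<longrightarrow> range unit_vec \<subseteq> H \<longrightarrow> \<iota> ` G \<subseteq> H \<longrightarrow> specker_seq H unit_vec"
proof -
  obtain a where a: "\<And>n. a n \<noteq> 0" "specker_seq G a" using assms unfolding specker_iff by blast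
  obtain r and \<phi> :: "nat \<Rightarrow> ('a \<Rightarrow> int) \<Rightarrow> int" where \<phi>: "\<And>k. additive_on G (\<phi> k)"
    "\<And>k. \<phi> k (a (r k)) \<noteq> 0" "\<And>k m. k \<noteq> m \<Longrightarrow> \<phi> k (a (r m)) = 0"
    using specker_seq_biorthogonal[OF a(2,1)] by blast
  define \<iota> where "\<iota> x = (\<lambda>k. \<phi> k x)" for x
  have \<iota>: "additive_on G \<iota>" using \<phi>(1) by (auto simp: additive_on_def \<iota>_def fun_eq_iff)
  have "specker_seq H unit_vec" if H: "subgrp H" "range unit_vec \<subseteq> H" "\<iota> ` G \<subseteq> H" for H
  proof -
    have "inj r"
    proof (rule injI, rule ccontr)
      fix k m assume "r k = r m" "k \<noteq> m"
      then show False using \<phi>(2)[of k] \<phi>(3)[of k m] by simp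
    qed
    then have "specker_seq H (\<iota> \<circ> a \<circ> r)"
      by (intro specker_seq_reindex specker_seq_comp[OF \<iota> H(3) a(2)])
    moreover have "\<iota> \<circ> a \<circ> r = (\<lambda>k. \<phi> k (a (r k)) *z unit_vec k)"
      using \<phi>(3) by (auto simp: fun_eq_iff \<iota>_def zscale_def unit_vec_def)
    ultimately have "specker_seq H (\<lambda>k. \<phi> k (a (r k)) *z unit_vec k)" by simp
    then show ?thesis by (rule specker_seq_unscale[OF H(1,2) \<phi>(2)])
  qed
  then show ?thesis by blast
qed

lemma specker_infinite:
  assumes "specker G" shows "infinite G"
proof
  assume fin: "finite G"
  obtain a where a: "\<And>n. a n \<in> G" "\<And>n. a n \<noteq> 0" "specker_seq G a"
    using assms unfolding specker_iff by blast
  obtain r and \<phi> :: "nat \<Rightarrow> ('a \<Rightarrow> int) \<Rightarrow> int" where \<phi>: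
    "\<And>k. \<phi> k (a (r k)) \<noteq> 0" "\<And>k m. k \<noteq> m \<Longrightarrow> \<phi> k (a (r m)) = 0"
    using specker_seq_biorthogonal[OF a(3,2)] by blast
  have "inj (a \<circ> r)"
  proof (rule injI, rule ccontr)
    fix k m assume "(a \<circ> r) k = (a \<circ> r) m" "k \<noteq> m"
    then show False using \<phi>(1)[of k] \<phi>(2)[of k m] by simp
  qed
  then have "infinite (range (a \<circ> r))" by (rule range_inj_infinite)
  moreover have "range (a \<circ> r) \<subseteq> G" using a(1) by auto
  ultimately show False using fin finite_subset by blast
qed

section \<open>Pure spans and \<open>q\<close>-adically small vectors\<close>

definition pure_span :: "('a \<Rightarrow> int) set \<Rightarrow> ('a \<Rightarrow> int) set" where
  "pure_span S = {x. \<exists>N > 0. N *z x \<in> zmod.span S}"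

lemma span_subset_pure_span: "zmod.span S \<subseteq> pure_span S"
  unfolding pure_span_def by (force intro: exI[of _ 1])

lemma subgrp_pure_span: "subgrp (pure_span S)"
  unfolding subgrp_iff_subspace zmod.subspace_def
proof (intro conjI ballI allI)
  show "0 \<in> pure_span S" using span_subset_pure_span zmod.span_zero by blast
next
  fix x y assume "x \<in> pure_span S" "y \<in> pure_span S"
  then obtain M N where M: "M > 0" "M *z x \<in> zmod.span S" and N: "N > 0" "N *z y \<in> zmod.span S"
    unfolding pure_span_def by blast
  have "(M * N) *z (x + y) = N *z (M *z x) + M *z (N *z y)"
    by (simp add: zmod.scale_right_distrib mult.commute)
  also have "\<dots> \<in> zmod.span S" using zmod.span_add[OF zmod.span_scale[OF M(2)] zmod.span_scale[OF N(2)]] .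
  finally show "x + y \<in> pure_span S" unfolding pure_span_def using M N by (auto intro: exI[of _ "M * N"])
next
  fix c x assume "x \<in> pure_span S"
  then obtain N where N: "N > 0" "N *z x \<in> zmod.span S" unfolding pure_span_def by blast
  have "N *z (c *z x) = c *z (N *z x)" by (simp add: mult.commute)
  also have "\<dots> \<in> zmod.span S" by (rule zmod.span_scale[OF N(2)])
  finally show "c *z x \<in> pure_span S" unfolding pure_span_def using N(1) by blast
qed

lemma pure_span_divide:
  assumes N: "N > 0" and Nx: "N *z x \<in> pure_span S" shows "x \<in> pure_span S"
proof -
  obtain M where M: "M > 0" "M *z (N *z x) \<in> zmod.span S" using Nx unfolding pure_span_def by blast
  then have "(M * N) *z x \<in> zmod.span S" by simp
  moreover have "M * N > 0" using M(1) N by simp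
  ultimately show ?thesis unfolding pure_span_def by blast
qed

lemma truncation_in_span:
  fixes w :: "nat \<Rightarrow> int"
  shows "(\<lambda>n. if n < K then w n else 0) \<in> zmod.span (range unit_vec)"
proof (induction K)
  case 0
  have "(\<lambda>n. if n < 0 then w n else 0) = 0" by (simp add: fun_eq_iff)
  then show ?case using zmod.span_zero by metis
next
  case (Suc K)
  have "(\<lambda>n. if n < Suc K then w n else 0) = (\<lambda>n. if n < K then w n else 0) + w K *z unit_vec K"
    by (auto simp: fun_eq_iff unit_vec_def zscale_def less_Suc_eq)
  then show ?case using zmod.span_add[OF Suc zmod.span_scale[OF zmod.span_base[OF rangeI]]] by metis
qed

lemma int_eq_0_if_dvd_all_powers:
  fixes x q :: int assumes "q \<ge> 2" "\<And>K. q ^ K dvd x" shows "x = 0"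
proof (rule ccontr)
  assume "x \<noteq> 0"
  define K where "K = nat \<bar>x\<bar>"
  have "q ^ K \<le> \<bar>x\<bar>" using dvd_imp_le_int[OF \<open>x \<noteq> 0\<close> assms(2)] assms(1) by simp
  moreover have "\<bar>x\<bar> < 2 ^ K"
  proof -
    have "int K < int (2 ^ K)" using less_exp[of K] by (simp only: of_nat_less_iff)
    then show ?thesis using \<open>x \<noteq> 0\<close> by (simp add: K_def)
  qed
  moreover have "(2::int) ^ K \<le> q ^ K" using assms(1) by (simp add: power_mono)
  ultimately show False by simp
qed

definition adically_small :: "(nat \<Rightarrow> int) \<Rightarrow> bool" where
  "adically_small w \<longleftrightarrow> (\<exists>q \<ge> 2. \<forall>n. q ^ n dvd w n)"

lemma additive_on_vanishes_on_adically_small: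
  fixes f :: "(nat \<Rightarrow> int) \<Rightarrow> int"
  assumes H: "subgrp H" and units: "range unit_vec \<subseteq> H"
    and pure: "\<And>N z. N > 0 \<Longrightarrow> N *z z \<in> H \<Longrightarrow> z \<in> H"
    and f: "additive_on H f" and f_units: "\<And>k. f (unit_vec k) = 0"
    and w: "w \<in> H" and q: "q \<ge> 2" and small: "\<And>n. q ^ n dvd w n"
  shows "f w = 0"
proof (rule int_eq_0_if_dvd_all_powers[OF q])
  fix K
  \<comment> \<open>\<open>w\<close> minus its first \<open>K\<close> coordinates is divisible by \<open>q ^ K\<close> in the pure subgroup \<open>H\<close>\<close>
  define t where "t = (\<lambda>n. if n < K then w n else 0)"
  define w' where "w' = (\<lambda>n. if n < K then 0 else w n div q ^ K)"
  have H': "zmod.subspace H" using H by (simp add: subgrp_iff_subspace)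
  have "zmod.span (range unit_vec) \<subseteq> {x \<in> H. f x = 0}"
    using units f_units by (intro zmod.span_minimal subspace_kernel[OF H f]) auto
  then have t: "t \<in> H" "f t = 0" using truncation_in_span[of K w] unfolding t_def by auto
  have "q ^ K * (w n div q ^ K) = w n" if "\<not> n < K" for n
    using dvd_trans[OF le_imp_power_dvd small[of n]] that by simp
  then have decomp: "w = t + q ^ K *z w'" by (simp add: fun_eq_iff t_def w'_def zscale_def)
  have "q ^ K *z w' \<in> H"
    using zmod.subspace_diff[OF H' w t(1)] decomp by (metis add_diff_cancel_left')
  then have w': "w' \<in> H" by (rule pure[rotated]) (use q in simp)
  have "f w = f t + f (q ^ K *z w')"
    using f t(1) zmod.subspace_scale[OF H' w'] decomp unfolding additive_on_def by metis
  also have "\<dots> = q ^ K * f w'" using t(2) additive_on_zscale[OF H f w'] by simp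
  finally show "q ^ K dvd f w" by simp
qed

lemma dual_spanning_pure_span:
  assumes units: "range unit_vec \<subseteq> S"
    and small: "\<And>w. w \<in> S \<Longrightarrow> w \<in> range unit_vec \<or> adically_small w"
  shows "dual_spanning (pure_span S) unit_vec"
  unfolding dual_spanning_def
proof (intro allI impI ballI)
  fix f :: "(nat \<Rightarrow> int) \<Rightarrow> int" and x
  assume f: "additive_on (pure_span S) f" and f_units: "\<forall>k. f (unit_vec k) = 0" and x: "x \<in> pure_span S"
  have P: "subgrp (pure_span S)" by (rule subgrp_pure_span)
  have S_sub: "S \<subseteq> pure_span S" using span_subset_pure_span zmod.span_superset by blast
  have "f w = 0" if "w \<in> S" for w
  proof -
    have "w \<in> range unit_vec \<or> (\<exists>q \<ge> 2. \<forall>n. q ^ n dvd w n)"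
      using small[OF that] unfolding adically_small_def .
    then show ?thesis
    proof (elim disjE exE conjE)
      assume "w \<in> range unit_vec"
      then show ?thesis using f_units by auto
    next
      fix q :: int assume q: "q \<ge> 2" "\<forall>n. q ^ n dvd w n"
      have units': "range unit_vec \<subseteq> pure_span S" using units S_sub by blast
      show ?thesis
      proof (rule additive_on_vanishes_on_adically_small[OF P units' pure_span_divide f])
        show "f (unit_vec k) = 0" for k using f_units by blast
        show "w \<in> pure_span S" using S_sub that by blast
        show "q \<ge> 2" "q ^ n dvd w n" for n using q by simp_all
      qed
    qed
  qed
  then have "zmod.span S \<subseteq> {x \<in> pure_span S. f x = 0}"
    using S_sub by (intro zmod.span_minimal subspace_kernel[OF P f]) blast
  moreover obtain N where "N > 0" "N *z x \<in> zmod.span S" using x unfolding pure_span_def by blast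
  ultimately show "f x = 0" using additive_on_zscale[OF P f x] by auto
qed

lemma coprime_power_split:
  fixes p q :: int assumes "coprime p q"
  shows "\<exists>Y Z :: (nat \<Rightarrow> int) \<Rightarrow> nat \<Rightarrow> int. (\<forall>v. Y v + Z v = v) \<and>
    (\<forall>v n. p ^ n dvd Y v n) \<and> (\<forall>v n. q ^ n dvd Z v n)"
proof -
  have "\<exists>st. fst st * p ^ n + snd st * q ^ n = 1" for n
  proof -
    have "gcd (p ^ n) (q ^ n) = 1" using assms by simp
    moreover obtain s t where "s * p ^ n + t * q ^ n = gcd (p ^ n) (q ^ n)"
      using bezout_int[of "p ^ n" "q ^ n"] by blast
    ultimately show ?thesis by (intro exI[of _ "(s, t)"]) simp
  qed
  then have "\<exists>st. \<forall>n. fst (st n) * p ^ n + snd (st n) * q ^ n = 1" by (intro choice allI)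
  then obtain st where st: "\<And>n. fst (st n) * p ^ n + snd (st n) * q ^ n = 1" by blast
  define Y where "Y v = (\<lambda>n. v n * fst (st n) * p ^ n)" for v :: "nat \<Rightarrow> int"
  define Z where "Z v = (\<lambda>n. v n * snd (st n) * q ^ n)" for v :: "nat \<Rightarrow> int"
  have "Y v + Z v = v" for v
  proof
    fix n
    have "(Y v + Z v) n = v n * (fst (st n) * p ^ n + snd (st n) * q ^ n)"
      by (simp add: Y_def Z_def algebra_simps)
    then show "(Y v + Z v) n = v n" using st[of n] by simp
  qed
  moreover have "p ^ n dvd Y v n" "q ^ n dvd Z v n" for v n by (simp_all add: Y_def Z_def)
  ultimately show ?thesis by blast
qed

lemma pure_span_of_split:
  fixes V :: "(nat \<Rightarrow> int) set"
  assumes YZ: "\<And>v. Y v + Z v = v" and small: "\<And>v. adically_small (Y v)" "\<And>v. adically_small (Z v)"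
  shows "subgrp (pure_span (range unit_vec \<union> Y ` V \<union> Z ` V)) \<and>
    range unit_vec \<subseteq> pure_span (range unit_vec \<union> Y ` V \<union> Z ` V) \<and>
    V \<subseteq> pure_span (range unit_vec \<union> Y ` V \<union> Z ` V) \<and>
    dual_spanning (pure_span (range unit_vec \<union> Y ` V \<union> Z ` V)) unit_vec"
proof -
  define S where "S = range unit_vec \<union> Y ` V \<union> Z ` V"
  have H: "subgrp (pure_span S)" by (rule subgrp_pure_span)
  have S_H: "S \<subseteq> pure_span S" using span_subset_pure_span zmod.span_superset by blast
  have "V \<subseteq> pure_span S"
  proof
    fix v assume "v \<in> V"
    then have "Y v \<in> pure_span S" "Z v \<in> pure_span S" using S_H unfolding S_def by auto
    then have "Y v + Z v \<in> pure_span S" using H unfolding subgrp_def by blast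
    then show "v \<in> pure_span S" by (simp only: YZ)
  qed
  moreover have "dual_spanning (pure_span S) unit_vec"
    by (rule dual_spanning_pure_span) (auto simp: S_def small)
  ultimately show ?thesis using H S_H unfolding S_def by blast
qed

section \<open>Rank\<close>

lemma sum_fun_apply: "(\<Sum>s\<in>S. f s) x = (\<Sum>s\<in>S. (f s :: 'a \<Rightarrow> 'b::comm_monoid_add) x)"
  by (induction S rule: infinite_finite_induct) (auto simp: plus_fun_def)

definition qscale :: "rat \<Rightarrow> ('j \<Rightarrow> rat) \<Rightarrow> ('j \<Rightarrow> rat)" where
  "qscale c v = (\<lambda>j. c * v j)"

interpretation qvec: vector_space "qscale :: rat \<Rightarrow> ('j \<Rightarrow> rat) \<Rightarrow> ('j \<Rightarrow> rat)"
  by unfold_locales (auto simp: qscale_def fun_eq_iff algebra_simps plus_fun_def)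

lemma exists_common_denominator:
  assumes "finite T"
  shows "\<exists>d::int. d > 0 \<and> (\<forall>v\<in>T. \<exists>k::int. of_int d * (u v :: rat) = of_int k)"
proof -
  define d where "d = (\<Prod>v\<in>T. snd (quotient_of (u v)))"
  have "d > 0" unfolding d_def by (rule prod_pos) (auto simp: quotient_of_denom_pos')
  moreover have "\<exists>k::int. of_int d * u v = of_int k" if "v \<in> T" for v
  proof -
    obtain p q where pq: "quotient_of (u v) = (p, q)" by (cases "quotient_of (u v)")
    have q: "q > 0" using quotient_of_denom_pos[OF pq] .
    have "q dvd d" unfolding d_def using that assms pq
      by (metis dvd_prodI snd_conv)
    then obtain r where r: "d = q * r" by (auto elim: dvdE)
    have "u v = of_int p / of_int q" using quotient_of_div[OF pq] .
    hence "of_int d * u v = of_int (r * p)" using q r by (simp add: field_simps)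
    thus ?thesis by blast
  qed
  ultimately show ?thesis by blast
qed

definition rat_vec :: "('j \<Rightarrow> int) \<Rightarrow> 'j \<Rightarrow> rat" where
  "rat_vec a = (\<lambda>j. of_int (a j))"

lemma inj_rat_vec: "inj rat_vec"
  unfolding rat_vec_def inj_def by (auto simp: fun_eq_iff)

lemma rat_vec_in_span_unit_vecs:
  assumes U: "finite U" and a: "\<forall>j. j \<notin> U \<longrightarrow> a j = 0"
  shows "rat_vec a \<in> qvec.span ((\<lambda>u j. if j = u then 1 else 0) ` U)"
proof -
  have "rat_vec a = (\<Sum>u\<in>U. qscale (rat_vec a u) (\<lambda>j. if j = u then 1 else 0))"
  proof
    fix j
    have "(\<Sum>u\<in>U. qscale (rat_vec a u) (\<lambda>j. if j = u then 1 else 0)) j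
        = (\<Sum>u\<in>U. if j = u then rat_vec a u else 0)"
      by (auto simp: sum_fun_apply qscale_def intro!: sum.cong)
    also have "\<dots> = rat_vec a j" using a U by (auto simp: sum.delta' rat_vec_def)
    finally show "rat_vec a j = (\<Sum>u\<in>U. qscale (rat_vec a u) (\<lambda>j. if j = u then 1 else 0)) j" by simp
  qed
  also have "\<dots> \<in> qvec.span ((\<lambda>u j. if j = u then 1 else 0) ` U)"
    by (intro qvec.span_sum qvec.span_scale qvec.span_base) auto
  finally show ?thesis .
qed

lemma independent_rat_vec_image:
  assumes A: "Z_indep A" shows "qvec.independent (rat_vec ` A)"
proof
  assume "qvec.dependent (rat_vec ` A)"
  then obtain S u where S: "finite S" "S \<subseteq> rat_vec ` A" "(\<Sum>v\<in>S. qscale (u v) v) = 0"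
    and nz: "\<exists>v\<in>S. u v \<noteq> 0"
    unfolding qvec.dependent_explicit by blast
  obtain d where d: "d > 0" "\<forall>v\<in>S. \<exists>k::int. of_int d * u v = of_int k"
    using exists_common_denominator[OF S(1)] by blast
  define c where "c a = (if rat_vec a \<in> S then (SOME k::int. of_int d * u (rat_vec a) = of_int k) else 0)" for a
  have c: "of_int (c a) = (if rat_vec a \<in> S then of_int d * u (rat_vec a) else 0)" for a
    using d(2) unfolding c_def by (auto intro: someI2_ex)
  have finA: "finite A" using A by (simp add: Z_indep_def)
  have "(\<Sum>a\<in>A. c a * a j) = 0" for j
  proof -
    have "(of_int (\<Sum>a\<in>A. c a * a j) :: rat) = (\<Sum>a\<in>A. of_int (c a) * of_int (a j))" by simp
    also have "\<dots> = (\<Sum>a\<in>{a\<in>A. rat_vec a \<in> S}. of_int d * (u (rat_vec a) * rat_vec a j))"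
      by (rule sum.mono_neutral_cong_right) (auto simp: finA c rat_vec_def)
    also have "\<dots> = of_int d * (\<Sum>v\<in>rat_vec ` {a\<in>A. rat_vec a \<in> S}. u v * v j)"
      by (subst sum.reindex) (auto simp: sum_distrib_left intro: inj_on_subset[OF inj_rat_vec])
    also have "rat_vec ` {a\<in>A. rat_vec a \<in> S} = S" using S(2) by auto
    also have "(\<Sum>v\<in>S. u v * v j) = (\<Sum>v\<in>S. qscale (u v) v) j"
      by (simp add: sum_fun_apply qscale_def)
    also have "\<dots> = 0" using S(3) by simp
    finally show ?thesis by (simp only: of_int_eq_0_iff mult_zero_right)
  qed
  then have "\<forall>a\<in>A. c a = 0" using A unfolding Z_indep_def by blast
  moreover obtain v where v: "v \<in> S" "u v \<noteq> 0" using nz by blast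
  moreover obtain a where "a \<in> A" "v = rat_vec a" using v S(2) by auto
  ultimately show False using c[of a] d(1) by simp
qed

lemma card_le_if_Z_indep_supported:
  fixes A :: "('j \<Rightarrow> int) set"
  assumes U: "finite U" and A: "Z_indep A" and supported: "\<forall>a\<in>A. \<forall>j. j \<notin> U \<longrightarrow> a j = 0"
  shows "card A \<le> card U"
proof -
  define T :: "('j \<Rightarrow> rat) set" where "T = (\<lambda>u j. if j = u then 1 else 0) ` U"
  have span: "rat_vec ` A \<subseteq> qvec.span T"
    using rat_vec_in_span_unit_vecs[OF U] supported by (auto simp: T_def)
  have "finite T" using U by (simp add: T_def)
  then have "card (rat_vec ` A) \<le> card T"
    using qvec.independent_span_bound[OF _ independent_rat_vec_image[OF A] span] by blast
  also have "card T \<le> card U" unfolding T_def by (rule card_image_le[OF U])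
  finally show ?thesis by (simp add: card_image inj_on_subset[OF inj_rat_vec])
qed

lemma finite_rank_if_supported:
  fixes S :: "('j \<Rightarrow> int) set"
  assumes "finite U" "\<forall>v\<in>S. \<forall>j. j \<notin> U \<longrightarrow> v j = 0"
  shows "finite_rank S"
  unfolding finite_rank_def using card_le_if_Z_indep_supported[OF assms(1)] assms(2) by blast

lemma infinite_rank_if_unit_vecs:
  fixes u :: "nat \<Rightarrow> 'a"
  assumes u: "inj u" and H: "\<And>k. unit_vec (u k) \<in> H"
  shows "\<not> finite_rank H"
proof
  assume "finite_rank H"
  then obtain n where n: "\<And>A. A \<subseteq> H \<Longrightarrow> Z_indep A \<Longrightarrow> card A \<le> n" unfolding finite_rank_def by blast
  define A where "A = (unit_vec \<circ> u) ` {..n}"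
  have inj: "inj (unit_vec \<circ> u)" using u by (auto simp: inj_def unit_vec_def fun_eq_iff)
  have fin: "finite A" by (simp add: A_def)
  have "Z_indep A"
    unfolding Z_indep_def
  proof (intro conjI allI impI ballI)
    show "finite A" by (fact fin)
  next
    fix c :: "('a \<Rightarrow> int) \<Rightarrow> int" and e
    assume sum0: "\<forall>j. (\<Sum>a\<in>A. c a * a j) = 0" and e: "e \<in> A"
    then obtain k where k: "e = unit_vec (u k)" by (auto simp: A_def)
    have "(\<Sum>a\<in>A. c a * a (u k)) = (\<Sum>a\<in>A. if a = e then c a else 0)"
    proof (rule sum.cong)
      fix a assume "a \<in> A"
      then obtain m where m: "a = unit_vec (u m)" by (auto simp: A_def)
      have "a = e \<longleftrightarrow> m = k" using inj_eq[OF inj, of m k] by (simp add: k m)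
      moreover have "a (u k) = (if m = k then 1 else 0)" using u by (auto simp: m unit_vec_def inj_eq)
      ultimately show "c a * a (u k) = (if a = e then c a else 0)" by simp
    qed simp
    also have "\<dots> = c e" using e by (simp add: sum.delta[OF fin])
    finally show "c e = 0" using sum0 by simp
  qed
  moreover have "A \<subseteq> H" using H by (auto simp: A_def)
  moreover have "card A = card {..n}" unfolding A_def by (rule card_image[OF inj_on_subset[OF inj]]) simp
  then have "card A = Suc n" by simp
  ultimately show False using n[of A] by simp
qed

section \<open>A criterion for binding\<close>

definition supp :: "('a \<Rightarrow> 'b::zero) \<Rightarrow> 'a set" where
  "supp v = {j. v j \<noteq> 0}"

lemma disjoint_supports_subseq:
  fixes v :: "nat \<Rightarrow> 'a \<Rightarrow> 'b::zero"
  assumes fin: "\<And>n. finite (supp (v n))" and col: "\<And>j. finite {n. v n j \<noteq> 0}"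
    and inf: "infinite {n. v n \<noteq> 0}"
  shows "\<exists>r :: nat \<Rightarrow> nat. inj r \<and> (\<forall>k. v (r k) \<noteq> 0) \<and>
    (\<forall>k m. k \<noteq> m \<longrightarrow> supp (v (r k)) \<inter> supp (v (r m)) = {})"
proof -
  define P :: "(nat \<Rightarrow> nat) \<Rightarrow> nat \<Rightarrow> nat \<Rightarrow> bool"
    where "P f k n \<longleftrightarrow> v n \<noteq> 0 \<and> (\<forall>i<k. supp (v n) \<inter> supp (v (f i)) = {})" for f k n
  have "\<exists>f. \<forall>k. P f k (f k)"
  proof (rule dependent_wellorder_choice)
    show "P f k n = P g k n" if "\<And>i. i < k \<Longrightarrow> f i = g i" for f g k n
      using that by (simp add: P_def)
  next
    fix k and f :: "nat \<Rightarrow> nat"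
    define B where "B = (\<Union>i<k. \<Union>j\<in>supp (v (f i)). {n. v n j \<noteq> 0})"
    have "finite B" unfolding B_def by (intro finite_UN_I fin col finite_lessThan)
    then have "infinite ({n. v n \<noteq> 0} - B)" using inf by (rule Diff_infinite_finite)
    from infinite_imp_nonempty[OF this] obtain n where "v n \<noteq> 0" "n \<notin> B" by blast
    moreover have "\<forall>i<k. supp (v n) \<inter> supp (v (f i)) = {}" using \<open>n \<notin> B\<close> by (auto simp: B_def supp_def)
    ultimately show "\<exists>n. P f k n" unfolding P_def by blast
  qed
  then obtain f where f: "\<And>k. P f k (f k)" by blast
  have disj: "supp (v (f k)) \<inter> supp (v (f m)) = {}" if "k \<noteq> m" for k m
  proof (cases "k < m")
    case True
    then show ?thesis using f[of m] unfolding P_def by auto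
  next
    case False
    then have "m < k" using that by simp
    then show ?thesis using f[of k] unfolding P_def by blast
  qed
  have nz: "v (f k) \<noteq> 0" for k using f[of k] by (simp add: P_def)
  then have supp_nz: "supp (v (f k)) \<noteq> {}" for k by (auto simp: supp_def fun_eq_iff)
  have "inj f"
  proof (rule injI, rule ccontr)
    fix k m assume "f k = f m" "k \<noteq> m"
    then show False using disj[of k m] supp_nz[of k] by simp
  qed
  then show ?thesis using nz disj by blast
qed

lemma additive_on_restricted_coordinate_sum:
  fixes h :: "'x::plus \<Rightarrow> 'j \<Rightarrow> int"
  assumes h: "additive_on H h" and fin: "\<And>x. x \<in> H \<Longrightarrow> finite (supp (h x))"
  shows "additive_on H (\<lambda>x. \<Sum>j\<in>S \<inter> supp (h x). h x j)"
  unfolding additive_on_def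
proof (intro ballI)
  fix x y assume xy: "x \<in> H" "y \<in> H"
  define T where "T = S \<inter> (supp (h x) \<union> supp (h y))"
  have T: "finite T" using fin xy by (simp add: T_def)
  have restrict: "(\<Sum>j\<in>S \<inter> supp g. g j) = (\<Sum>j\<in>T. g j)" if "S \<inter> supp g \<subseteq> T" for g :: "'j \<Rightarrow> int"
    using that T by (intro sum.mono_neutral_left) (auto simp: T_def supp_def)
  have hxy: "h (x + y) = h x + h y" using h xy by (simp add: additive_on_def)
  have "(\<Sum>j\<in>S \<inter> supp (h (x + y)). h (x + y) j) = (\<Sum>j\<in>T. h (x + y) j)"
    by (rule restrict) (auto simp: hxy T_def supp_def)
  also have "\<dots> = (\<Sum>j\<in>T. h x j) + (\<Sum>j\<in>T. h y j)" by (simp add: hxy sum.distrib)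
  also have "(\<Sum>j\<in>T. h x j) = (\<Sum>j\<in>S \<inter> supp (h x). h x j)"
    by (rule restrict[symmetric]) (auto simp: T_def)
  also have "(\<Sum>j\<in>T. h y j) = (\<Sum>j\<in>S \<inter> supp (h y). h y j)"
    by (rule restrict[symmetric]) (auto simp: T_def)
  finally show "(\<Sum>j\<in>S \<inter> supp (h (x + y)). h (x + y) j) =
      (\<Sum>j\<in>S \<inter> supp (h x). h x j) + (\<Sum>j\<in>S \<inter> supp (h y). h y j)" .
qed

lemma additive_functional_nonzero_on_disjoint_supports:
  fixes h :: "'x::plus \<Rightarrow> 'j \<Rightarrow> int" and c :: "nat \<Rightarrow> 'x"
  assumes h: "additive_on H h" and fin: "\<And>x. x \<in> H \<Longrightarrow> finite (supp (h x))"
    and nz: "\<And>k. h (c k) \<noteq> 0"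
    and disj: "\<And>k m. k \<noteq> m \<Longrightarrow> supp (h (c k)) \<inter> supp (h (c m)) = {}"
  shows "\<exists>f :: 'x \<Rightarrow> int. additive_on H f \<and> (\<forall>k. f (c k) \<noteq> 0)"
proof -
  have "\<forall>k. \<exists>j. j \<in> supp (h (c k))" using nz by (auto simp: supp_def fun_eq_iff)
  then have "\<exists>j. \<forall>k. j k \<in> supp (h (c k))" by (rule choice)
  then obtain j where j: "\<And>k. j k \<in> supp (h (c k))" by blast
  define f where "f x = (\<Sum>i\<in>range j \<inter> supp (h x). h x i)" for x
  have "additive_on H f"
    unfolding f_def by (rule additive_on_restricted_coordinate_sum[OF h fin])
  moreover have "f (c k) \<noteq> 0" for k
  proof -
    have others: "j m \<notin> supp (h (c k))" if "m \<noteq> k" for m using j[of m] disj[OF that] by blast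
    have "x = j k" if x: "x \<in> range j \<inter> supp (h (c k))" for x
    proof -
      obtain m where "x = j m" "j m \<in> supp (h (c k))" using x by blast
      then show ?thesis using others[of m] by (cases "m = k") auto
    qed
    then have "range j \<inter> supp (h (c k)) = {j k}" using j[of k] by blast
    then show ?thesis using j[of k] by (simp add: f_def supp_def)
  qed
  ultimately show ?thesis by blast
qed

lemma finitely_many_nonzero_images:
  assumes h: "additive_on H h" "h ` H \<subseteq> free_ab" and b: "range b \<subseteq> H" "specker_seq H b"
  shows "finite {n. h (b n) \<noteq> 0}"
proof (rule ccontr)
  assume inf: "infinite {n. h (b n) \<noteq> 0}"
  have fin: "finite (supp (h x))" if "x \<in> H" for x using h(2) that by (auto simp: free_ab_def supp_def)
  have "finite {n. h (b n) j \<noteq> 0}" for j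
  proof -
    have "additive_on H (\<lambda>x. h x j)" using h(1) by (simp add: additive_on_def)
    from b(2)[unfolded specker_seq_def, rule_format, OF this] show ?thesis by simp
  qed
  moreover have "finite (supp (h (b n)))" for n using fin b(1) by (simp add: image_subset_iff)
  ultimately obtain r :: "nat \<Rightarrow> nat" where r: "inj r" "\<forall>k. h (b (r k)) \<noteq> 0"
    "\<forall>k m. k \<noteq> m \<longrightarrow> supp (h (b (r k))) \<inter> supp (h (b (r m))) = {}"
    using disjoint_supports_subseq[of "\<lambda>n. h (b n)", OF _ _ inf] by blast
  have "\<exists>f :: ('a \<Rightarrow> int) \<Rightarrow> int. additive_on H f \<and> (\<forall>k. f ((b \<circ> r) k) \<noteq> 0)"
    by (rule additive_functional_nonzero_on_disjoint_supports[OF h(1) fin]) (use r in auto)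
  then obtain f :: "('a \<Rightarrow> int) \<Rightarrow> int" where f: "additive_on H f" "\<And>k. f (b (r k)) \<noteq> 0" by auto
  then have "range r \<subseteq> {n. f (b n) \<noteq> 0}" by auto
  then have "infinite {n. f (b n) \<noteq> 0}" using range_inj_infinite[OF r(1)] finite_subset by blast
  then show False using b(2)[unfolded specker_seq_def, rule_format, OF f(1)] by blast
qed

lemma binds_self_if_dual_spanning_specker_seq:
  fixes H :: "('x \<Rightarrow> int) set"
  assumes b: "range b \<subseteq> H" "specker_seq H b" and span: "dual_spanning H b"
  shows "binds H H"
  unfolding binds_def
proof (intro allI impI)
  fix h :: "('x \<Rightarrow> int) \<Rightarrow> ('x \<Rightarrow> int) \<Rightarrow> int"
  assume h: "additive_on H h" "h ` H \<subseteq> free_ab"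
  define U where "U = (\<Union>n\<in>{n. h (b n) \<noteq> 0}. supp (h (b n)))"
  have "h (b n) \<in> free_ab" for n using h(2) b(1) by blast
  then have "finite U" unfolding U_def
    using finitely_many_nonzero_images[OF h b] by (simp add: free_ab_def supp_def)
  moreover have "v j = 0" if "v \<in> h ` H" "j \<notin> U" for v j
  proof -
    have coord: "additive_on H (\<lambda>x. h x j)" using h(1) by (simp add: additive_on_def)
    have "h (b n) j = 0" for n
      using \<open>j \<notin> U\<close> unfolding U_def supp_def by (cases "h (b n) = 0") auto
    then have "h x j = 0" if "x \<in> H" for x
      using span[unfolded dual_spanning_def, rule_format, OF coord _ that] by simp
    then show ?thesis using that(1) by blast
  qed
  ultimately show "finite_rank (h ` H)" by (intro finite_rank_if_supported) auto
qed

lemma self_binding_if_unit_vecs: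
  assumes "subgrp H" "inj u" "range (unit_vec \<circ> u) \<subseteq> H"
    "specker_seq H (unit_vec \<circ> u)" "dual_spanning H (unit_vec \<circ> u)"
  shows "self_binding H"
  unfolding self_binding_def
  using assms(1) binds_self_if_dual_spanning_specker_seq[OF assms(3-5)]
    infinite_rank_if_unit_vecs[OF assms(2), of H] assms(3) by auto

section \<open>Cardinality\<close>

lemma card_of_Times_le:
  assumes "infinite C" "|A| \<le>o |C|" "|B| \<le>o |C|" shows "|A \<times> B| \<le>o |C|"
  using card_of_Times_ordLeq_infinite_Field[of "|C|" A B] assms
  by (simp add: Field_card_of card_of_Card_order card_of_card_order_on)

lemma card_of_Un_le:
  assumes "infinite C" "|A| \<le>o |C|" "|B| \<le>o |C|" shows "|A \<union> B| \<le>o |C|"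
  using card_of_Un_ordLeq_infinite_Field[of "|C|" A B] assms
  by (simp add: Field_card_of card_of_Card_order card_of_card_order_on)

lemma card_of_image_le: "|A| \<le>o |C| \<Longrightarrow> |f ` A| \<le>o |C|"
  using card_of_image ordLeq_transitive by blast

lemma card_of_int_le:
  assumes "infinite C" shows "|UNIV :: int set| \<le>o |C|"
proof -
  have "|UNIV :: int set| \<le>o |UNIV :: nat set|"
    using card_of_ordLeq[of "UNIV :: int set" "UNIV :: nat set"] inj_int_encode by blast
  then show ?thesis using assms infinite_iff_card_of_nat ordLeq_transitive by blast
qed

lemma card_of_lists_le:
  assumes C: "infinite C" and A: "|A| \<le>o |C|" shows "|lists A| \<le>o |C|"
proof -
  define L where "L n = {l. set l \<subseteq> A \<and> length l = n}" for n
  have L: "|L n| \<le>o |C|" for n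
  proof (induction n)
    case 0
    have "C \<noteq> {}" using C by auto
    then have "|{[]}| \<le>o |C|" by (rule card_of_singl_ordLeq)
    moreover have "L 0 = {[]}" by (auto simp: L_def)
    ultimately show ?case by simp
  next
    case (Suc n)
    have "L (Suc n) \<subseteq> (\<lambda>(x, l). x # l) ` (A \<times> L n)"
    proof
      fix l assume "l \<in> L (Suc n)"
      then obtain x l' where "l = x # l'" "x \<in> A" "l' \<in> L n" by (cases l) (auto simp: L_def)
      then show "l \<in> (\<lambda>(x, l). x # l) ` (A \<times> L n)" by force
    qed
    moreover have "|(\<lambda>(x, l). x # l) ` (A \<times> L n)| \<le>o |C|"
      by (rule card_of_image_le[OF card_of_Times_le[OF C A Suc]])
    ultimately show ?case by (rule ordLeq_transitive[OF card_of_mono1])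
  qed
  have "lists A = (\<Union>n\<in>UNIV. L n)" by (auto simp: L_def lists_eq_set)
  also have "|\<Union>n\<in>UNIV. L n| \<le>o |C|"
    using infinite_iff_card_of_nat C L by (intro card_of_UNION_ordLeq_infinite[OF C]) auto
  finally show ?thesis .
qed

primrec lin_comb :: "(int \<times> ('a \<Rightarrow> int)) list \<Rightarrow> 'a \<Rightarrow> int" where
  "lin_comb [] = 0"
| "lin_comb (p # l) = fst p *z snd p + lin_comb l"

lemma lin_comb_append: "lin_comb (l1 @ l2) = lin_comb l1 + lin_comb l2"
  by (induction l1) (simp_all add: add.assoc)

lemma lin_comb_scale: "c *z lin_comb l = lin_comb (map (\<lambda>(d, u). (c * d, u)) l)"
proof (induction l)
  case (Cons p l)
  obtain d u where p: "p = (d, u)" by (cases p)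
  have "c *z lin_comb (p # l) = (c * d) *z u + c *z lin_comb l"
    by (simp only: p lin_comb.simps fst_conv snd_conv zmod.scale_right_distrib zmod.scale_scale)
  also have "\<dots> = lin_comb (map (\<lambda>(d, u). (c * d, u)) (p # l))"
    by (simp only: p Cons.IH list.map prod.case lin_comb.simps fst_conv snd_conv)
  finally show ?case .
qed (simp only: list.map lin_comb.simps zmod.scale_zero_right)

lemma span_subset_lin_combs: "zmod.span S \<subseteq> lin_comb ` lists (UNIV \<times> S)"
proof (rule zmod.span_minimal)
  show "S \<subseteq> lin_comb ` lists (UNIV \<times> S)"
  proof
    fix u assume "u \<in> S"
    then show "u \<in> lin_comb ` lists (UNIV \<times> S)" by (intro image_eqI[of _ _ "[(1, u)]"]) simp_all
  qed
  show "zmod.subspace (lin_comb ` lists (UNIV \<times> S))"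
    unfolding zmod.subspace_def
  proof (intro conjI ballI allI)
    show "0 \<in> lin_comb ` lists (UNIV \<times> S)" by (intro image_eqI[of _ _ "[]"]) simp_all
  next
    fix x y assume "x \<in> lin_comb ` lists (UNIV \<times> S)" "y \<in> lin_comb ` lists (UNIV \<times> S)"
    then obtain l1 l2 where "x = lin_comb l1" "y = lin_comb l2" "l1 \<in> lists (UNIV \<times> S)" "l2 \<in> lists (UNIV \<times> S)"
      by blast
    then show "x + y \<in> lin_comb ` lists (UNIV \<times> S)"
      by (intro image_eqI[of _ _ "l1 @ l2"]) (simp_all add: lin_comb_append)
  next
    fix c x assume "x \<in> lin_comb ` lists (UNIV \<times> S)"
    then obtain l where "x = lin_comb l" "l \<in> lists (UNIV \<times> S)" by blast
    then show "c *z x \<in> lin_comb ` lists (UNIV \<times> S)"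
      by (intro image_eqI[of _ _ "map (\<lambda>(d, u). (c * d, u)) l"]) (auto simp: lin_comb_scale)
  qed
qed

lemma card_of_pure_span_le:
  assumes C: "infinite C" and S: "|S| \<le>o |C|" shows "|pure_span S| \<le>o |C|"
proof -
  define D where "D = (UNIV :: int set) \<times> lin_comb ` lists (UNIV \<times> S)"
  have "pure_span S \<subseteq> (\<lambda>(N, y). (\<lambda>n. y n div N)) ` D"
  proof
    fix x assume "x \<in> pure_span S"
    then obtain N where N: "N > 0" "N *z x \<in> zmod.span S" unfolding pure_span_def by blast
    then have "(N, N *z x) \<in> D" using span_subset_lin_combs unfolding D_def by blast
    then show "x \<in> (\<lambda>(N, y). (\<lambda>n. y n div N)) ` D"
      by (rule rev_image_eqI) (use N(1) in \<open>simp add: zscale_def\<close>)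
  qed
  moreover have "|D| \<le>o |C|" unfolding D_def
    by (intro card_of_Times_le[OF C card_of_int_le[OF C]] card_of_image_le card_of_lists_le[OF C]
        card_of_Times_le[OF C card_of_int_le[OF C] S])
  ultimately show ?thesis
    by (rule ordLeq_transitive[OF card_of_mono1 card_of_image_le])
qed

lemma card_of_pure_span_of_split:
  fixes V :: "(nat \<Rightarrow> int) set" and Y Z :: "(nat \<Rightarrow> int) \<Rightarrow> nat \<Rightarrow> int"
  assumes C: "infinite C" and V: "|V| \<le>o |C|"
  shows "|pure_span (range unit_vec \<union> Y ` V \<union> Z ` V)| \<le>o |C|"
proof (rule card_of_pure_span_le[OF C])
  have "|UNIV :: nat set| \<le>o |C|" using C infinite_iff_card_of_nat by blast
  then have "|range (unit_vec :: nat \<Rightarrow> nat \<Rightarrow> int)| \<le>o |C|" by (rule card_of_image_le)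
  moreover have "|Y ` V| \<le>o |C|" "|Z ` V| \<le>o |C|" using V by (rule card_of_image_le)+
  ultimately show "|range unit_vec \<union> Y ` V \<union> Z ` V| \<le>o |C|"
    by (intro card_of_Un_le[OF C])
qed

section \<open>Self-binding groups from Specker groups\<close>

definition zero_extend :: "('a \<Rightarrow> 'b) \<Rightarrow> ('a \<Rightarrow> int) \<Rightarrow> 'b \<Rightarrow> int" where
  "zero_extend u v = (\<lambda>y. if y \<in> range u then v (inv u y) else 0)"

lemma additive_zero_extend: "additive_on H (zero_extend u)"
  by (auto simp: additive_on_def zero_extend_def fun_eq_iff)

lemma zero_extend_unit_vec:
  assumes "inj u" shows "zero_extend u (unit_vec k) = unit_vec (u k)"
proof
  fix y
  show "zero_extend u (unit_vec k) y = unit_vec (u k) y"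
  proof (cases "y \<in> range u")
    case True
    then obtain m where "y = u m" by blast
    then show ?thesis using assms by (simp add: zero_extend_def unit_vec_def inj_eq)
  next
    case False
    then show ?thesis by (auto simp: zero_extend_def unit_vec_def)
  qed
qed

lemma self_binding_zero_extend:
  fixes u :: "nat \<Rightarrow> 'x"
  assumes u: "inj u" and H: "subgrp H" "range unit_vec \<subseteq> H"
    and seq: "specker_seq H unit_vec" and span: "dual_spanning H unit_vec"
  shows "self_binding (zero_extend u ` H)"
proof (rule self_binding_if_unit_vecs[OF _ u])
  have ext: "unit_vec \<circ> u = zero_extend u \<circ> unit_vec" using zero_extend_unit_vec[OF u] by auto
  show "subgrp (zero_extend u ` H)" using H(1) additive_zero_extend by (rule subgrp_image)
  show "range (unit_vec \<circ> u) \<subseteq> zero_extend u ` H" unfolding ext using H(2) by auto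
  show "specker_seq (zero_extend u ` H) (unit_vec \<circ> u)"
    unfolding ext by (rule specker_seq_comp[OF additive_zero_extend subset_refl seq])
  show "dual_spanning (zero_extend u ` H) (unit_vec \<circ> u)"
    unfolding ext by (rule dual_spanning_image[OF additive_zero_extend span])
qed

lemma specker_unit_vec_subgroup:
  fixes G :: "('a \<Rightarrow> int) set"
  assumes "specker G"
  shows "\<exists>H :: (nat \<Rightarrow> int) set. subgrp H \<and> range unit_vec \<subseteq> H \<and> specker_seq H unit_vec \<and>
    dual_spanning H unit_vec \<and> |H| \<le>o |G|"
proof -
  obtain \<iota> :: "('a \<Rightarrow> int) \<Rightarrow> nat \<Rightarrow> int"
    where seq: "\<And>H. subgrp H \<Longrightarrow> range unit_vec \<subseteq> H \<Longrightarrow> \<iota> ` G \<subseteq> H \<Longrightarrow> specker_seq H unit_vec"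
    using specker_embeds_unit_vecs[OF assms] by blast
  have coprime: "coprime (2 :: int) 3"
  proof (rule coprimeI)
    fix c :: int assume "c dvd 2" "c dvd 3"
    then have "c dvd 3 - 2" by (rule dvd_diff[rotated])
    then show "is_unit c" by simp
  qed
  then obtain Y Z :: "(nat \<Rightarrow> int) \<Rightarrow> nat \<Rightarrow> int" where YZ: "\<And>v. Y v + Z v = v"
    "\<And>v n. 2 ^ n dvd Y v n" "\<And>v n. 3 ^ n dvd Z v n"
    using coprime_power_split[OF coprime] by blast
  have small: "adically_small (Y v)" "adically_small (Z v)" for v
    unfolding adically_small_def using YZ(2,3) by (auto intro: exI[of _ 2] exI[of _ 3])
  define H where "H = pure_span (range unit_vec \<union> Y ` \<iota> ` G \<union> Z ` \<iota> ` G)"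
  have H: "subgrp H \<and> range unit_vec \<subseteq> H \<and> \<iota> ` G \<subseteq> H \<and> dual_spanning H unit_vec"
    unfolding H_def using YZ(1) small by (rule pure_span_of_split)
  have "|\<iota> ` G| \<le>o |G|" by (rule card_of_image_le[OF ordLeq_refl[OF card_of_Card_order]])
  then have "|H| \<le>o |G|" unfolding H_def
    by (rule card_of_pure_span_of_split[OF specker_infinite[OF assms]])
  then show ?thesis using H seq by blast
qed

theorem theorem7:
  fixes G :: "('i \<Rightarrow> int) set"
  assumes "specker G"
  shows "\<exists>H :: ((('i \<Rightarrow> int) set) \<Rightarrow> int) set.
           self_binding H \<and> (\<exists>f. inj_on f H \<and> f ` H \<subseteq> G)"
proof -
  obtain H0 :: "(nat \<Rightarrow> int) set" where H0: "subgrp H0" "range unit_vec \<subseteq> H0"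
    "specker_seq H0 unit_vec" "dual_spanning H0 unit_vec" and card: "|H0| \<le>o |G|"
    using specker_unit_vec_subgroup[OF assms] by blast
  define u :: "nat \<Rightarrow> ('i \<Rightarrow> int) set" where "u n = {\<lambda>_. int n}" for n
  have "inj u" by (rule injI) (simp add: u_def fun_eq_iff)
  then have "self_binding (zero_extend u ` H0)" using H0 by (rule self_binding_zero_extend)
  moreover have "|zero_extend u ` H0| \<le>o |G|" using card by (rule card_of_image_le)
  then have "\<exists>f. inj_on f (zero_extend u ` H0) \<and> f ` zero_extend u ` H0 \<subseteq> G"
    by (simp only: card_of_ordLeq[symmetric])
  ultimately show ?thesis by blast
qed

end
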